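(* ATL and rCTL are incomparable in expressiveness: (i) there is an ATL formula $\psi$ such that for no rCTL formula $\chi$ and truth value $u\in\mathbb{B}_4$ does it hold that $\mathcal{S},s\models\psi\iff V_{rCTL}(s,\chi)\succeq u$ for all concurrent game structures $\mathcal{S}$ and states $s$ (with $V_{rCTL}$ evaluated in the underlying Kripke structure of $\mathcal{S}$); and (ii) there are an rCTL formula $\chi$ and a truth value $u\in\mathbb{B}_4$ such that for no ATL formula $\psi$ does it hold that $\mathcal{S}_\mathcal{K},s\models\psi\iff V_{rCTL}(s,\chi)\succeq u$ for all Kripke structures $\mathcal{K}$ and states $s$.
   Context: Fix a finite set $\mathrm{AP}$ of atomic propositions. A concurrent game structure (CGS) is a tuple $\mathcal{S}=(St,Ag,Ac,\delta,\ell)$ where $St$ is a finite set of states, $Ag$ a finite set of agents, $Ac$ a finite set of actions, $\ell:St\to 2^{\mathrm{AP}}$ a labeling, and $\delta:St\times AV\to St$ a transition function, where $AV$ is the set of action vectors for $Ag$ (an action vector for $A\subseteq Ag$ is a map $A\to Ac$). A state $s'$ is a successor of $s$ if $s'=\delta(s,v)$ for some $v\in AV$. A path is an infinite sequence $\pi=s_0s_1s_2\cdots$ of states with $s_{n+1}$ a successor of $s_n$ for all $n$; write $\pi[n]=s_n$. A strategy for an agent is a function $f:St^+\to Ac$. For $A\subseteq Ag$ and a set $F_A=\{f_a\mid a\in A\}$ of strategies, one for each agent in $A$, $out(s,F_A)$ is the set of paths $s_0s_1\cdots$ with $s_0=s$ such that for every $n\ge 0$ there is $v\in AV$ with $v(a)=f_a(s_0\cdots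 s_n)$ for all $a\in A$ and $s_{n+1}=\delta(s_n,v)$. $\mathbb{B}_4=\{1111,0111,0011,0001,0000\}$ is totally ordered by $1111\succ0111\succ0011\succ0001\succ0000$; for $b=b_1b_2b_3b_4\in\mathbb{B}_4$ and $k\in\{1,2,3,4\}$, $b[k]=b_k$; max and min on $\mathbb{B}_4$ refer to this order, and on bits to $0<1$. ATL formulas: state formulas $\varphi::=p\mid\neg\varphi\mid\varphi\vee\varphi\mid\varphi\wedge\varphi\mid\varphi\to\varphi\mid\langle\!\langle A\rangle\!\rangle\Phi\mid[\![A]\!]\Phi$ and path formulas $\Phi::=\bigcirc\varphi\mid\Diamond\varphi\mid\Box\varphi$, with the standard Boolean semantics: $\mathcal{S},s\models p$ iff $p\in\ell(s)$; Boolean connectives as usual; $\mathcal{S},s\models\langle\!\langle A\rangle\!\rangle\Phi$ iff there is a set $F_A$ of strategies (one per agent in $A$) with $\mathcal{S},\pi\models\Phi$ for all $\pi\in out(s,F_A)$; $\mathcal{S},s\models[\![A]\!]\Phi$ iff for every such $F_A$ some $\pi\in out(s,F_A)$ satisfies $\mathcal{S},\pi\models\Phi$; $\mathcal{S},\pi\models\bigcirc\varphi$ iff $\mathcal{S},\pi[1]\models\varphi$; $\mathcal{S},\pi\models\Diamond\varphi$ iff $\mathcal{S},\pi[i]\models\varphi$ for some $i\ge0$; $\mathcal{S},\pi\models\Box\varphi$ iff $\mathcal{S},\pi[i]\models\varphi$ for all $i\ge0$. A Kripke structure is $\mathcal{K}=(S,I,R,L)$ with finite state set $S$, initial states $I\subseteq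 S$, transition relation $R\subseteq S\times S$ such that every state has an $R$-successor, and labeling $L:S\to2^{\mathrm{AP}}$; a path is an infinite sequence $s_0s_1\cdots$ with $(s_i,s_{i+1})\in R$; $\mathit{paths}(s)$ is the set of paths starting in $s$. rCTL formulas: state formulas $\varphi::=p\mid\neg\varphi\mid\varphi\vee\varphi\mid\varphi\wedge\varphi\mid\varphi\to\varphi\mid\exists\Phi\mid\forall\Phi$, path formulas $\Phi::=\dot\bigcirc\varphi\mid\dot\Diamond\varphi\mid\dot\Box\varphi$. The valuation $V_{rCTL}$ into $\mathbb{B}_4$: $V_{rCTL}(s,p)=1111$ if $p\in L(s)$, else $0000$; $\vee,\wedge$ are max, min; $V_{rCTL}(s,\neg\varphi)=0000$ if $V_{rCTL}(s,\varphi)=1111$, else $1111$; $V_{rCTL}(s,\varphi_1\to\varphi_2)=1111$ if $V_{rCTL}(s,\varphi_1)\preceq V_{rCTL}(s,\varphi_2)$, else $V_{rCTL}(s,\varphi_2)$; $V_{rCTL}(s,\exists\Phi)=\max_{\pi\in\mathit{paths}(s)}V_{rCTL}(\pi,\Phi)$, $V_{rCTL}(s,\forall\Phi)=\min_{\pi\in\mathit{paths}(s)}V_{rCTL}(\pi,\Phi)$; $V_{rCTL}(\pi,\dot\bigcirc\varphi)=V_{rCTL}(\pi[1],\varphi)$; $V_{rCTL}(\pi,\dot\Diamond\varphi)[k]=\max_{i\ge0}V_{rCTL}(\pi[i],\varphi)[k]$; $V_{rCTL}(\pi,\dot\Box\varphi)=b_1b_2b_3b_4$ with $b_1=\min_{i}V_{rCTL}(\pi[i],\varphi)[1]$,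 $b_2=\max_{i}\min_{j\ge i}V_{rCTL}(\pi[j],\varphi)[2]$, $b_3=\min_{i}\max_{j\ge i}V_{rCTL}(\pi[j],\varphi)[3]$, $b_4=\max_{i}V_{rCTL}(\pi[i],\varphi)[4]$. The underlying Kripke structure of a CGS $\mathcal{S}$ has the same states and labeling, with $R=\{(s,s')\mid s'\text{ is a successor of }s\}$. The CGS associated with $\mathcal{K}$ is $\mathcal{S}_\mathcal{K}=(S,\{a\},S,\delta,L)$ with a single agent $a$, actions $S$, and $\delta(s,s')=s'$ if $(s,s')\in R$, and $\delta(s,s')=s''$ for some fixed $s''$ with $(s,s'')\in R$ otherwise. *)

theory Defs
  imports Main "HOL-Library.FuncSet"
begin

text \<open>States, agents and actions are natural numbers; a CGS is given by explicit
  finite carrier sets. The type parameter 'p is the (finite) set AP of atomic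
  propositions.\<close>

record 'p cgs =
  cSt :: "nat set"
  cAg :: "nat set"
  cAc :: "nat set"
  cdelta :: "nat \<Rightarrow> (nat \<Rightarrow> nat) \<Rightarrow> nat"
  clab :: "nat \<Rightarrow> 'p set"

definition AV :: "'p cgs \<Rightarrow> (nat \<Rightarrow> nat) set" where
  "AV G = cAg G \<rightarrow>\<^sub>E cAc G"

definition cgs_wf :: "'p cgs \<Rightarrow> bool" where
  "cgs_wf G \<longleftrightarrow> finite (cSt G) \<and> finite (cAg G) \<and> finite (cAc G) \<and> cAc G \<noteq> {}
     \<and> (\<forall>s\<in>cSt G. \<forall>v\<in>AV G. cdelta G s v \<in> cSt G)"

definition is_succ :: "'p cgs \<Rightarrow> nat \<Rightarrow> nat \<Rightarrow> bool" where
  "is_succ G s s' \<longleftrightarrow> (\<exists>v\<in>AV G. s' = cdelta G s v)"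

definition hist :: "(nat \<Rightarrow> nat) \<Rightarrow> nat \<Rightarrow> nat list" where
  "hist \<pi> n = map \<pi> [0..<Suc n]"

text \<open>A set of strategies F_A = {f_a | a in A}, encoded as F a = f_a; a strategy
  maps histories to actions.\<close>
definition strats :: "'p cgs \<Rightarrow> nat set \<Rightarrow> (nat \<Rightarrow> nat list \<Rightarrow> nat) \<Rightarrow> bool" where
  "strats G A F \<longleftrightarrow> (\<forall>a\<in>A \<inter> cAg G. \<forall>h. F a h \<in> cAc G)"

definition out :: "'p cgs \<Rightarrow> nat \<Rightarrow> nat set \<Rightarrow> (nat \<Rightarrow> nat list \<Rightarrow> nat) \<Rightarrow> (nat \<Rightarrow> nat) set" where
  "out G s A F = {\<pi>. \<pi> 0 = s \<and> (\<forall>n. \<exists>v\<in>AV G. (\<forall>a\<in>A \<inter> cAg G. v a = F a (hist \<pi> n))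
                                   \<and> \<pi> (Suc n) = cdelta G (\<pi> n) v)}"

datatype temp = Nxt | Evt | Alw

datatype 'p atl =
    AProp 'p
  | ANeg "'p atl"
  | AOr "'p atl" "'p atl"
  | AAnd "'p atl" "'p atl"
  | AImp "'p atl" "'p atl"
  | ACoal "nat set" temp "'p atl"
  | ADual "nat set" temp "'p atl"

fun holds_path :: "temp \<Rightarrow> (nat \<Rightarrow> bool) \<Rightarrow> (nat \<Rightarrow> nat) \<Rightarrow> bool" where
  "holds_path Nxt P \<pi> = P (\<pi> 1)"
| "holds_path Evt P \<pi> = (\<exists>i. P (\<pi> i))"
| "holds_path Alw P \<pi> = (\<forall>i. P (\<pi> i))"

fun atl_sat :: "'p cgs \<Rightarrow> nat \<Rightarrow> 'p atl \<Rightarrow> bool" where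
  "atl_sat G s (AProp p) = (p \<in> clab G s)"
| "atl_sat G s (ANeg \<phi>) = (\<not> atl_sat G s \<phi>)"
| "atl_sat G s (AOr \<phi> \<psi>) = (atl_sat G s \<phi> \<or> atl_sat G s \<psi>)"
| "atl_sat G s (AAnd \<phi> \<psi>) = (atl_sat G s \<phi> \<and> atl_sat G s \<psi>)"
| "atl_sat G s (AImp \<phi> \<psi>) = (atl_sat G s \<phi> \<longrightarrow> atl_sat G s \<psi>)"
| "atl_sat G s (ACoal A T \<phi>) =
     (\<exists>F. strats G A F \<and> (\<forall>\<pi>\<in>out G s A F. holds_path T (\<lambda>t. atl_sat G t \<phi>) \<pi>))"
| "atl_sat G s (ADual A T \<phi>) =
     (\<forall>F. strats G A F \<longrightarrow> (\<exists>\<pi>\<in>out G s A F. holds_path T (\<lambda>t. atl_sat G t \<phi>) \<pi>))"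

record 'p kripke =
  kS :: "nat set"
  kI :: "nat set"
  kR :: "(nat \<times> nat) set"
  kL :: "nat \<Rightarrow> 'p set"

definition kripke_wf :: "'p kripke \<Rightarrow> bool" where
  "kripke_wf K \<longleftrightarrow> finite (kS K) \<and> kI K \<subseteq> kS K \<and> kR K \<subseteq> kS K \<times> kS K
     \<and> (\<forall>s\<in>kS K. \<exists>s'. (s, s') \<in> kR K)"

definition kpaths :: "'p kripke \<Rightarrow> nat \<Rightarrow> (nat \<Rightarrow> nat) set" where
  "kpaths K s = {\<pi>. \<pi> 0 = s \<and> (\<forall>i. (\<pi> i, \<pi> (Suc i)) \<in> kR K)}"

text \<open>A truth value b1b2b3b4 is the list [b1,b2,b3,b4].\<close>
type_synonym b4 = "bool list"

definition b1111 :: b4 where "b1111 = [True, True, True, True]"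
definition b0111 :: b4 where "b0111 = [False, True, True, True]"
definition b0011 :: b4 where "b0011 = [False, False, True, True]"
definition b0001 :: b4 where "b0001 = [False, False, False, True]"
definition b0000 :: b4 where "b0000 = [False, False, False, False]"

definition B4 :: "b4 set" where
  "B4 = {b1111, b0111, b0011, b0001, b0000}"

definition b4_rank :: "b4 \<Rightarrow> nat" where
  "b4_rank b = (if b = b1111 then 4 else if b = b0111 then 3 else if b = b0011 then 2
                else if b = b0001 then 1 else 0)"

definition b4_le :: "b4 \<Rightarrow> b4 \<Rightarrow> bool" where
  "b4_le b c \<longleftrightarrow> b4_rank b \<le> b4_rank c"

definition bit :: "b4 \<Rightarrow> nat \<Rightarrow> bool" where
  "bit b k = b ! (k - 1)"

definition b4_max :: "b4 \<Rightarrow> b4 \<Rightarrow> b4" where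
  "b4_max x y = (if b4_le x y then y else x)"
definition b4_min :: "b4 \<Rightarrow> b4 \<Rightarrow> b4" where
  "b4_min x y = (if b4_le x y then x else y)"

definition b4_Max :: "b4 set \<Rightarrow> b4" where
  "b4_Max X = (THE b. b \<in> X \<and> (\<forall>c\<in>X. b4_le c b))"
definition b4_Min :: "b4 set \<Rightarrow> b4" where
  "b4_Min X = (THE b. b \<in> X \<and> (\<forall>c\<in>X. b4_le b c))"

datatype 'p rctl =
    RProp 'p
  | RNeg "'p rctl"
  | ROr "'p rctl" "'p rctl"
  | RAnd "'p rctl" "'p rctl"
  | RImp "'p rctl" "'p rctl"
  | REx temp "'p rctl"
  | RAll temp "'p rctl"

fun path_val :: "temp \<Rightarrow> (nat \<Rightarrow> b4) \<Rightarrow> (nat \<Rightarrow> nat) \<Rightarrow> b4" where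
  "path_val Nxt f \<pi> = f (\<pi> 1)"
| "path_val Evt f \<pi> = map (\<lambda>k. \<exists>i. bit (f (\<pi> i)) k) [1, 2, 3, 4]"
| "path_val Alw f \<pi> =
     [\<forall>i. bit (f (\<pi> i)) 1,
      \<exists>i. \<forall>j\<ge>i. bit (f (\<pi> j)) 2,
      \<forall>i. \<exists>j\<ge>i. bit (f (\<pi> j)) 3,
      \<exists>i. bit (f (\<pi> i)) 4]"

fun rval :: "'p kripke \<Rightarrow> nat \<Rightarrow> 'p rctl \<Rightarrow> b4" where
  "rval K s (RProp p) = (if p \<in> kL K s then b1111 else b0000)"
| "rval K s (RNeg \<phi>) = (if rval K s \<phi> = b1111 then b0000 else b1111)"
| "rval K s (ROr \<phi> \<psi>) = b4_max (rval K s \<phi>) (rval K s \<psi>)"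
| "rval K s (RAnd \<phi> \<psi>) = b4_min (rval K s \<phi>) (rval K s \<psi>)"
| "rval K s (RImp \<phi> \<psi>) = (if b4_le (rval K s \<phi>) (rval K s \<psi>) then b1111 else rval K s \<psi>)"
| "rval K s (REx T \<phi>) = b4_Max {path_val T (\<lambda>t. rval K t \<phi>) \<pi> | \<pi>. \<pi> \<in> kpaths K s}"
| "rval K s (RAll T \<phi>) = b4_Min {path_val T (\<lambda>t. rval K t \<phi>) \<pi> | \<pi>. \<pi> \<in> kpaths K s}"

text \<open>Underlying Kripke structure of a CGS (the initial states are irrelevant; we take all states).\<close>
definition kripke_of :: "'p cgs \<Rightarrow> 'p kripke" where
  "kripke_of G = \<lparr>kS = cSt G, kI = cSt G,
                  kR = {(s, s'). s \<in> cSt G \<and> is_succ G s s'}, kL = clab G\<rparr>"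

definition cgs_of :: "'p kripke \<Rightarrow> 'p cgs" where
  "cgs_of K = \<lparr>cSt = kS K, cAg = {0}, cAc = kS K,
     cdelta = (\<lambda>s v. if (s, v 0) \<in> kR K then v 0 else (SOME s''. (s, s'') \<in> kR K)),
     clab = kL K\<rparr>"

end

theory Submission
  imports Defs
begin

text \<open>(i) Two one-agent game structures that differ only in the name of their agent have the
  same underlying Kripke structure, but \<open>\<langle>\<langle>{0}\<rangle>\<rangle>\<circle>p\<close> holds in the one whose agent is 0 and
  fails in the other, where the coalition {0} controls nothing.

  (ii) In the game structure of a Kripke structure a coalition either contains the single
  agent and then selects any one path, or it controls nothing; so ATL there only quantifies
  existentially or universally over paths with next, eventually and always. The rCTL formula
  \<open>\<exists>\<box>p\<close> at threshold 0011 says that some path visits p infinitely often. In the ladder of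
  height n this holds at state 2n+2, which alternates with the top state 2n+3, and fails at
  2n, from which every visit to a p-state strictly descends. States of equal parity whose
  levels are at least d cannot be separated by ATL formulas of nesting depth d, and 2n+2 and
  2n have levels n+1 and n.\<close>

lemma kpaths_cons:
  assumes "(y, z) \<in> kR K" and "\<rho> \<in> kpaths K z"
  shows "case_nat y \<rho> \<in> kpaths K y"
  using assms unfolding kpaths_def by (auto split: nat.split)

lemma kpaths_in_kS:
  assumes "kripke_wf K" and "s \<in> kS K" and "\<pi> \<in> kpaths K s"
  shows "\<pi> i \<in> kS K"
  using assms by (cases i) (auto simp: kpaths_def kripke_wf_def)

lemma kpaths_nonempty:
  assumes wf: "kripke_wf K" and s: "s \<in> kS K"
  obtains \<pi> where "\<pi> \<in> kpaths K s"
proof -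
  obtain f where f: "\<And>x. x \<in> kS K \<Longrightarrow> (x, f x) \<in> kR K"
    using wf unfolding kripke_wf_def by metis
  have "(f ^^ i) s \<in> kS K" for i
    using f wf s unfolding kripke_wf_def by (induction i) auto
  then have "(\<lambda>i. (f ^^ i) s) \<in> kpaths K s"
    by (simp add: kpaths_def f)
  then show thesis by (rule that)
qed

lemma kpaths_first_edge: "\<pi> \<in> kpaths K s \<Longrightarrow> (s, \<pi> 1) \<in> kR K"
  unfolding kpaths_def by (auto dest: spec[of _ 0])

lemma kpaths_rtrancl:
  assumes "\<pi> \<in> kpaths K x"
  shows "(x, \<pi> j) \<in> (kR K)\<^sup>*"
  using assms by (induction j) (auto simp: kpaths_def intro: rtrancl_into_rtrancl)

lemma rtrancl_kpaths:
  assumes wf: "kripke_wf K" and "(y, w) \<in> (kR K)\<^sup>*" and "y \<in> kS K"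
  shows "\<exists>\<pi>\<in>kpaths K y. \<exists>j. \<pi> j = w"
  using assms(2,3)
proof (induction rule: converse_rtrancl_induct)
  case base
  then obtain \<pi> where "\<pi> \<in> kpaths K w" using kpaths_nonempty[OF wf] by blast
  then show ?case unfolding kpaths_def by auto
next
  case (step y z)
  then have "z \<in> kS K" using wf unfolding kripke_wf_def by blast
  with step obtain \<rho> j where "\<rho> \<in> kpaths K z" and "\<rho> j = w" by blast
  with kpaths_cons[OF step(1)] show ?case by (metis nat.case(2))
qed

section \<open>ATL on the game structure of a Kripke structure\<close>

lemma cgs_of_transition:
  assumes "kripke_wf K" and "x \<in> kS K"
  shows "(x, cdelta (cgs_of K) x v) \<in> kR K"
proof -
  have "\<exists>y. (x, y) \<in> kR K" using assms unfolding kripke_wf_def by blast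
  then have "(x, SOME y. (x, y) \<in> kR K) \<in> kR K" by (rule someI_ex)
  then show ?thesis unfolding cgs_of_def by simp
qed

lemma single_action_in_AV:
  "t \<in> kS K \<Longrightarrow> (\<lambda>a. if a = 0 then t else undefined) \<in> AV (cgs_of K)"
  by (auto simp: AV_def cgs_of_def PiE_def extensional_def)

lemma out_cgs_of_subset_kpaths:
  assumes wf: "kripke_wf K" and s: "s \<in> kS K"
  shows "out (cgs_of K) s A F \<subseteq> kpaths K s"
proof
  fix \<pi> assume \<pi>: "\<pi> \<in> out (cgs_of K) s A F"
  then have step: "\<exists>v. \<pi> (Suc i) = cdelta (cgs_of K) (\<pi> i) v" for i
    unfolding out_def by blast
  have edge: "\<pi> i \<in> kS K \<Longrightarrow> (\<pi> i, \<pi> (Suc i)) \<in> kR K" for i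
    using step[of i] cgs_of_transition[OF wf] by metis
  have "\<pi> i \<in> kS K" for i
  proof (induction i)
    case 0 show ?case using \<pi> s by (simp add: out_def)
  next
    case (Suc i) then show ?case using edge wf unfolding kripke_wf_def by blast
  qed
  then show "\<pi> \<in> kpaths K s" using \<pi> edge by (simp add: kpaths_def out_def)
qed

lemma out_cgs_of_uncontrolled:
  assumes wf: "kripke_wf K" and s: "s \<in> kS K" and A: "0 \<notin> A"
  shows "out (cgs_of K) s A F = kpaths K s"
proof
  show "kpaths K s \<subseteq> out (cgs_of K) s A F"
  proof
    fix \<pi> assume \<pi>: "\<pi> \<in> kpaths K s"
    show "\<pi> \<in> out (cgs_of K) s A F"
      unfolding out_def
    proof (intro CollectI conjI allI)
      show "\<pi> 0 = s" using \<pi> by (simp add: kpaths_def)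
      fix n
      let ?v = "\<lambda>a. if a = 0 then \<pi> (Suc n) else undefined"
      have "?v \<in> AV (cgs_of K)"
        by (rule single_action_in_AV) (rule kpaths_in_kS[OF wf s \<pi>])
      moreover have "\<pi> (Suc n) = cdelta (cgs_of K) (\<pi> n) ?v"
        using \<pi> by (simp add: kpaths_def cgs_of_def)
      ultimately show "\<exists>v\<in>AV (cgs_of K). (\<forall>a\<in>A \<inter> cAg (cgs_of K). v a = F a (hist \<pi> n))
          \<and> \<pi> (Suc n) = cdelta (cgs_of K) (\<pi> n) v"
        using A by (intro bexI[of _ ?v]) (auto simp: cgs_of_def)
    qed
  qed
qed (rule out_cgs_of_subset_kpaths[OF wf s])

lemma follow_path_strategy:
  assumes wf: "kripke_wf K" and s: "s \<in> kS K" and \<pi>: "\<pi> \<in> kpaths K s" and A: "0 \<in> A"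
  shows "strats (cgs_of K) A (\<lambda>a h. \<pi> (length h))"
    and "out (cgs_of K) s A (\<lambda>a h. \<pi> (length h)) \<subseteq> {\<pi>}"
proof -
  show "strats (cgs_of K) A (\<lambda>a h. \<pi> (length h))"
    using kpaths_in_kS[OF wf s \<pi>] by (simp add: strats_def cgs_of_def)
  show "out (cgs_of K) s A (\<lambda>a h. \<pi> (length h)) \<subseteq> {\<pi>}"
  proof
    fix \<rho> assume \<rho>: "\<rho> \<in> out (cgs_of K) s A (\<lambda>a h. \<pi> (length h))"
    have "\<rho> n = \<pi> n" for n
    proof (induction n)
      case 0 show ?case using \<rho> \<pi> by (simp add: out_def kpaths_def)
    next
      case (Suc n)
      from \<rho> obtain v where v: "\<forall>a\<in>A \<inter> cAg (cgs_of K). v a = \<pi> (length (hist \<rho> n))"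
          and next_state: "\<rho> (Suc n) = cdelta (cgs_of K) (\<rho> n) v"
        unfolding out_def by blast
      from v A have "v 0 = \<pi> (Suc n)" by (simp add: cgs_of_def hist_def)
      with Suc.IH next_state \<pi> show ?case by (simp add: cgs_of_def kpaths_def)
    qed
    then show "\<rho> \<in> {\<pi>}" by auto
  qed
qed

text \<open>The history of length n+1 of the unique outcome of a strategy F of agent 0.\<close>
primrec play :: "'p kripke \<Rightarrow> (nat \<Rightarrow> nat list \<Rightarrow> nat) \<Rightarrow> nat \<Rightarrow> nat \<Rightarrow> nat list" where
  "play K F s 0 = [s]"
| "play K F s (Suc n) = play K F s n @
     [cdelta (cgs_of K) (last (play K F s n)) (\<lambda>a. if a = 0 then F 0 (play K F s n) else undefined)]"

lemma hist_play: "hist (\<lambda>i. last (play K F s i)) n = play K F s n"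
  by (induction n) (simp_all add: hist_def)

lemma out_cgs_of_nonempty:
  assumes A: "0 \<in> A" and F: "strats (cgs_of K) A F"
  shows "(\<lambda>i. last (play K F s i)) \<in> out (cgs_of K) s A F"
  unfolding out_def
proof (intro CollectI conjI allI)
  fix n
  let ?v = "\<lambda>a. if a = 0 then F 0 (play K F s n) else undefined"
  have "?v \<in> AV (cgs_of K)"
    using F A by (intro single_action_in_AV) (simp add: strats_def cgs_of_def)
  then show "\<exists>v\<in>AV (cgs_of K). (\<forall>a\<in>A \<inter> cAg (cgs_of K). v a = F a (hist (\<lambda>i. last (play K F s i)) n))
      \<and> last (play K F s (Suc n)) = cdelta (cgs_of K) (last (play K F s n)) v"
    unfolding hist_play by (intro bexI[of _ ?v]) (auto simp: cgs_of_def)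
qed simp

lemma cgs_of_coalition_power:
  assumes wf: "kripke_wf K" and s: "s \<in> kS K"
  shows "(\<exists>F. strats (cgs_of K) A F \<and> (\<forall>\<pi>\<in>out (cgs_of K) s A F. Q \<pi>)) \<longleftrightarrow>
         (if 0 \<in> A then \<exists>\<pi>\<in>kpaths K s. Q \<pi> else \<forall>\<pi>\<in>kpaths K s. Q \<pi>)"
proof (cases "0 \<in> A")
  case True
  show ?thesis
  proof
    assume "\<exists>F. strats (cgs_of K) A F \<and> (\<forall>\<pi>\<in>out (cgs_of K) s A F. Q \<pi>)"
    then obtain F where "strats (cgs_of K) A F" and "\<forall>\<pi>\<in>out (cgs_of K) s A F. Q \<pi>" by blast
    with True out_cgs_of_nonempty out_cgs_of_subset_kpaths[OF wf s] show "if 0 \<in> A then \<exists>\<pi>\<in>kpaths K s. Q \<pi> else \<forall>\<pi>\<in>kpaths K s. Q \<pi>"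
      by (metis subsetD)
  next
    assume "if 0 \<in> A then \<exists>\<pi>\<in>kpaths K s. Q \<pi> else \<forall>\<pi>\<in>kpaths K s. Q \<pi>"
    with True obtain \<pi> where "\<pi> \<in> kpaths K s" and "Q \<pi>" by auto
    with follow_path_strategy[OF wf s _ True] show "\<exists>F. strats (cgs_of K) A F \<and> (\<forall>\<pi>\<in>out (cgs_of K) s A F. Q \<pi>)"
      by blast
  qed
next
  case False
  then have "strats (cgs_of K) A F" for F by (simp add: strats_def cgs_of_def)
  with False show ?thesis by (simp add: out_cgs_of_uncontrolled[OF wf s])
qed

lemma atl_sat_cgs_of_ACoal:
  assumes "kripke_wf K" and "s \<in> kS K"
  shows "atl_sat (cgs_of K) s (ACoal A T \<phi>) \<longleftrightarrow>
    (if 0 \<in> A then \<exists>\<pi>\<in>kpaths K s. holds_path T (\<lambda>t. atl_sat (cgs_of K) t \<phi>) \<pi>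
     else \<forall>\<pi>\<in>kpaths K s. holds_path T (\<lambda>t. atl_sat (cgs_of K) t \<phi>) \<pi>)"
  using cgs_of_coalition_power[OF assms] by simp

lemma atl_sat_cgs_of_ADual:
  assumes "kripke_wf K" and "s \<in> kS K"
  shows "atl_sat (cgs_of K) s (ADual A T \<phi>) \<longleftrightarrow>
    (if 0 \<in> A then \<forall>\<pi>\<in>kpaths K s. holds_path T (\<lambda>t. atl_sat (cgs_of K) t \<phi>) \<pi>
     else \<exists>\<pi>\<in>kpaths K s. holds_path T (\<lambda>t. atl_sat (cgs_of K) t \<phi>) \<pi>)"
  using cgs_of_coalition_power[OF assms, of A "\<lambda>\<pi>. \<not> holds_path T (\<lambda>t. atl_sat (cgs_of K) t \<phi>) \<pi>"]
  by (auto split: if_splits)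

section \<open>Graded path bisimulations\<close>

fun temp_dual :: "temp \<Rightarrow> temp" where
  "temp_dual Nxt = Nxt"
| "temp_dual Evt = Alw"
| "temp_dual Alw = Evt"

lemma not_holds_path_temp_dual:
  "\<not> holds_path T P \<pi> \<longleftrightarrow> holds_path (temp_dual T) (\<lambda>t. \<not> P t) \<pi>"
  by (cases T) auto

fun atl_depth :: "'p atl \<Rightarrow> nat" where
  "atl_depth (AProp p) = 0"
| "atl_depth (ANeg \<phi>) = atl_depth \<phi>"
| "atl_depth (AOr \<phi> \<psi>) = max (atl_depth \<phi>) (atl_depth \<psi>)"
| "atl_depth (AAnd \<phi> \<psi>) = max (atl_depth \<phi>) (atl_depth \<psi>)"
| "atl_depth (AImp \<phi> \<psi>) = max (atl_depth \<phi>) (atl_depth \<psi>)"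
| "atl_depth (ACoal A T \<phi>) = Suc (atl_depth \<phi>)"
| "atl_depth (ADual A T \<phi>) = Suc (atl_depth \<phi>)"

locale graded_path_bisimulation =
  fixes K :: "'p kripke" and Z :: "nat \<Rightarrow> nat \<Rightarrow> nat \<Rightarrow> bool"
  assumes wf: "kripke_wf K"
    and Z_kS: "Z d x y \<Longrightarrow> x \<in> kS K"
    and Z_sym: "Z d x y \<Longrightarrow> Z d y x"
    and Z_label: "Z d x y \<Longrightarrow> kL K x = kL K y"
    and Z_path: "\<lbrakk>Z (Suc d) x y; \<And>w w'. Z d w w' \<Longrightarrow> P w = P w';
                  \<pi> \<in> kpaths K x; holds_path T P \<pi>\<rbrakk> \<Longrightarrow> \<exists>\<pi>'\<in>kpaths K y. holds_path T P \<pi>'"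
begin

lemma ex_path_iff:
  assumes "Z (Suc d) x y" and "\<And>w w'. Z d w w' \<Longrightarrow> P w = P w'"
  shows "(\<exists>\<pi>\<in>kpaths K x. holds_path T P \<pi>) \<longleftrightarrow> (\<exists>\<pi>\<in>kpaths K y. holds_path T P \<pi>)"
  using Z_path[of d x y P] Z_path[of d y x P] Z_sym assms by blast

lemma all_path_iff:
  assumes "Z (Suc d) x y" and "\<And>w w'. Z d w w' \<Longrightarrow> P w = P w'"
  shows "(\<forall>\<pi>\<in>kpaths K x. holds_path T P \<pi>) \<longleftrightarrow> (\<forall>\<pi>\<in>kpaths K y. holds_path T P \<pi>)"
  using ex_path_iff[of d x y "\<lambda>t. \<not> P t" "temp_dual T"] assms
  by (auto simp flip: not_holds_path_temp_dual)

theorem atl_sat_invariant: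
  assumes "atl_depth \<psi> \<le> d" and "Z d x y"
  shows "atl_sat (cgs_of K) x \<psi> \<longleftrightarrow> atl_sat (cgs_of K) y \<psi>"
  using assms
proof (induction \<psi> arbitrary: d x y)
  case (AProp p)
  then show ?case by (simp add: cgs_of_def Z_label)
next
  case (ACoal A T \<phi>)
  then obtain d' where d: "d = Suc d'" and "atl_depth \<phi> \<le> d'" by (cases d) auto
  with ACoal.IH have "Z d' w w' \<Longrightarrow> atl_sat (cgs_of K) w \<phi> = atl_sat (cgs_of K) w' \<phi>" for w w'
    by blast
  moreover have "x \<in> kS K" and "y \<in> kS K" using ACoal.prems Z_kS Z_sym by blast+
  ultimately show ?case
    using ACoal.prems ex_path_iff all_path_iff
    unfolding d atl_sat_cgs_of_ACoal[OF wf \<open>x \<in> kS K\<close>] atl_sat_cgs_of_ACoal[OF wf \<open>y \<in> kS K\<close>]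
    by presburger
next
  case (ADual A T \<phi>)
  then obtain d' where d: "d = Suc d'" and "atl_depth \<phi> \<le> d'" by (cases d) auto
  with ADual.IH have "Z d' w w' \<Longrightarrow> atl_sat (cgs_of K) w \<phi> = atl_sat (cgs_of K) w' \<phi>" for w w'
    by blast
  moreover have "x \<in> kS K" and "y \<in> kS K" using ADual.prems Z_kS Z_sym by blast+
  ultimately show ?case
    using ADual.prems ex_path_iff all_path_iff
    unfolding d atl_sat_cgs_of_ADual[OF wf \<open>x \<in> kS K\<close>] atl_sat_cgs_of_ADual[OF wf \<open>y \<in> kS K\<close>]
    by presburger
qed auto

end

lemma b4_rank_inj_on: "inj_on b4_rank B4"
  by (auto simp: inj_on_def B4_def b4_rank_def b1111_def b0111_def b0011_def b0001_def b0000_def)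

lemma b4_Max_greatest:
  assumes "X \<subseteq> B4" and "X \<noteq> {}"
  shows "b4_Max X \<in> X" and "c \<in> X \<Longrightarrow> b4_le c (b4_Max X)"
proof -
  have "finite X" using assms(1) by (rule finite_subset) (simp add: B4_def)
  then have "Max (b4_rank ` X) \<in> b4_rank ` X" using assms(2) by simp
  then obtain b where b: "b \<in> X" "b4_rank b = Max (b4_rank ` X)" by auto
  with \<open>finite X\<close> have greatest: "\<forall>c\<in>X. b4_le c b" by (simp add: b4_le_def)
  have "b4_Max X = b" unfolding b4_Max_def
  proof (rule the_equality)
    fix b' assume b': "b' \<in> X \<and> (\<forall>c\<in>X. b4_le c b')"
    with b greatest have "b4_rank b' = b4_rank b"
      unfolding b4_le_def by (meson le_antisym)
    with b(1) b' assms(1) b4_rank_inj_on show "b' = b" by (auto dest: inj_onD)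
  qed (use b greatest in simp)
  with b greatest show "b4_Max X \<in> X" and "c \<in> X \<Longrightarrow> b4_le c (b4_Max X)" by auto
qed

lemma b4_le_b4_Max_iff:
  assumes "X \<subseteq> B4" and "X \<noteq> {}"
  shows "b4_le u (b4_Max X) \<longleftrightarrow> (\<exists>c\<in>X. b4_le u c)"
  using b4_Max_greatest[OF assms] unfolding b4_le_def by (meson order_trans)

text \<open>The bits of a dotted box along a path mean "always", "eventually always",
  "infinitely often" and "eventually"; each implies the next.\<close>
lemma chain_in_B4:
  assumes "g \<longrightarrow> e" and "e \<longrightarrow> i" and "i \<longrightarrow> f"
  shows "[g, e, i, f] \<in> B4" and "b4_le b0011 [g, e, i, f] \<longleftrightarrow> i"
  using assms by (cases g; cases e; cases i; cases f;
      simp add: B4_def b4_le_def b4_rank_def b1111_def b0111_def b0011_def b0001_def b0000_def)+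

lemma rval_EAlw_prop_ge_b0011:
  assumes "kripke_wf K" and "s \<in> kS K"
  shows "b4_le b0011 (rval K s (REx Alw (RProp p))) \<longleftrightarrow>
    (\<exists>\<pi>\<in>kpaths K s. \<forall>i. \<exists>j\<ge>i. p \<in> kL K (\<pi> j))"
proof -
  define box where "box \<pi> = [\<forall>i. p \<in> kL K (\<pi> i), \<exists>i. \<forall>j\<ge>i. p \<in> kL K (\<pi> j),
    \<forall>i. \<exists>j\<ge>i. p \<in> kL K (\<pi> j), \<exists>i. p \<in> kL K (\<pi> i)]" for \<pi> :: "nat \<Rightarrow> nat"
  have path_val_box: "path_val Alw (\<lambda>t. rval K t (RProp p)) \<pi> = box \<pi>" for \<pi>
    by (simp add: box_def bit_def b1111_def b0000_def if_distrib[of "\<lambda>b. b ! _"] cong: if_cong) blast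
  have val: "rval K s (REx Alw (RProp p)) = b4_Max (box ` kpaths K s)"
    unfolding rval.simps(6) path_val_box Setcompr_eq_image ..
  have "(\<exists>i. \<forall>j\<ge>i. P j) \<longrightarrow> (\<forall>i. \<exists>j\<ge>i. P j)" for P :: "nat \<Rightarrow> bool"
    by (metis max.cobounded1 max.cobounded2)
  then have box: "box \<pi> \<in> B4" "b4_le b0011 (box \<pi>) \<longleftrightarrow> (\<forall>i. \<exists>j\<ge>i. p \<in> kL K (\<pi> j))" for \<pi>
    unfolding box_def by (intro chain_in_B4; blast)+
  have "box ` kpaths K s \<subseteq> B4" using box(1) by blast
  moreover have "box ` kpaths K s \<noteq> {}" using kpaths_nonempty[OF assms] by blast
  ultimately show ?thesis
    unfolding val by (simp add: b4_le_b4_Max_iff box(2))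
qed

section \<open>ATL sees who controls a transition\<close>

definition binary_choice_cgs :: "nat \<Rightarrow> 'p cgs" where
  "binary_choice_cgs a = \<lparr>cSt = {0, 1, 2}, cAg = {a}, cAc = {1, 2},
     cdelta = (\<lambda>s v. if v a = 1 then 1 else 2), clab = (\<lambda>s. if s = 1 then UNIV else {})\<rparr>"

lemma cgs_wf_binary_choice: "cgs_wf (binary_choice_cgs a)"
  by (auto simp: cgs_wf_def binary_choice_cgs_def AV_def)

lemma is_succ_binary_choice: "is_succ (binary_choice_cgs a) s s' \<longleftrightarrow> s' = 1 \<or> s' = 2"
proof
  assume "is_succ (binary_choice_cgs a) s s'"
  then show "s' = 1 \<or> s' = 2" by (auto simp: is_succ_def binary_choice_cgs_def split: if_splits)
next
  assume s': "s' = 1 \<or> s' = 2"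
  let ?v = "\<lambda>b. if b = a then s' else undefined"
  have "?v \<in> AV (binary_choice_cgs a)"
    using s' by (auto simp: AV_def binary_choice_cgs_def PiE_def extensional_def)
  moreover have "s' = cdelta (binary_choice_cgs a) s ?v"
    using s' by (auto simp: binary_choice_cgs_def)
  ultimately show "is_succ (binary_choice_cgs a) s s'" unfolding is_succ_def by blast
qed

lemma kripke_of_binary_choice: "kripke_of (binary_choice_cgs a) = kripke_of (binary_choice_cgs b)"
  unfolding kripke_of_def is_succ_binary_choice by (simp add: binary_choice_cgs_def)

lemma atl_sat_binary_choice_next:
  fixes p :: 'p
  shows "atl_sat (binary_choice_cgs a) s (ACoal {0} Nxt (AProp p)) \<longleftrightarrow> a = 0"
proof -
  let ?G = "binary_choice_cgs a :: 'p cgs"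
  show ?thesis
  proof
    assume "a = 0"
    have "strats ?G {0} (\<lambda>b h. 1)"
      by (simp add: strats_def binary_choice_cgs_def)
    moreover have "\<pi> 1 = 1" if "\<pi> \<in> out ?G s {0} (\<lambda>b h. 1)" for \<pi>
      using that \<open>a = 0\<close> unfolding out_def by (force simp: binary_choice_cgs_def)
    ultimately show "atl_sat ?G s (ACoal {0} Nxt (AProp p))"
      by (auto simp: binary_choice_cgs_def)
  next
    assume "atl_sat ?G s (ACoal {0} Nxt (AProp p))"
    then obtain F where F: "\<forall>\<pi>\<in>out ?G s {0} F. holds_path Nxt (\<lambda>t. atl_sat ?G t (AProp p)) \<pi>"
      by auto
    show "a = 0"
    proof (rule ccontr)
      assume "a \<noteq> 0"
      let ?v = "\<lambda>b. if b = a then 2 else undefined"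
      have "?v \<in> AV ?G"
        by (auto simp: AV_def binary_choice_cgs_def PiE_def extensional_def)
      with \<open>a \<noteq> 0\<close> have "(\<lambda>n. if n = 0 then s else 2) \<in> out ?G s {0} F"
        unfolding out_def by (auto simp: binary_choice_cgs_def intro!: bexI[of _ ?v])
      with F have "holds_path Nxt (\<lambda>t. atl_sat ?G t (AProp p)) (\<lambda>n. if n = 0 then s else 2)"
        by blast
      then show False by (simp add: binary_choice_cgs_def)
    qed
  qed
qed

lemma coalition_next_not_rctl_expressible:
  fixes p :: 'p and \<chi> :: "'p rctl"
  shows "\<not> (\<forall>G s. cgs_wf G \<and> s \<in> cSt G \<longrightarrow>
        (atl_sat G s (ACoal {0} Nxt (AProp p)) \<longleftrightarrow> b4_le u (rval (kripke_of G) s \<chi>)))"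
proof
  assume expr: "\<forall>G s. cgs_wf G \<and> s \<in> cSt G \<longrightarrow>
        (atl_sat G s (ACoal {0} Nxt (AProp p)) \<longleftrightarrow> b4_le u (rval (kripke_of G) s \<chi>))"
  have "cgs_wf (binary_choice_cgs a :: 'p cgs) \<and> 0 \<in> cSt (binary_choice_cgs a :: 'p cgs)" for a
    using cgs_wf_binary_choice[of a] by (simp add: binary_choice_cgs_def)
  with expr have "atl_sat (binary_choice_cgs a :: 'p cgs) 0 (ACoal {0} Nxt (AProp p))
        \<longleftrightarrow> b4_le u (rval (kripke_of (binary_choice_cgs 0 :: 'p cgs)) 0 \<chi>)" for a
    by (metis kripke_of_binary_choice)
  from this[of 0] this[of 1] show False unfolding atl_sat_binary_choice_next by simp
qed

section \<open>The ladder structures\<close>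

text \<open>The odd state 2k+1 is entered only from 2k and returns to 2k-2, except the top state
  2n+3, which returns to 2n+2. State 1 is unreachable; it only keeps the indexing uniform
  (its edge goes to 1 - 3 = 0).\<close>
definition ladder_edge :: "nat \<Rightarrow> nat \<Rightarrow> nat \<Rightarrow> bool" where
  "ladder_edge n x y \<longleftrightarrow>
     (if even x then y = x \<or> (2 \<le> x \<and> (y = x + 1 \<or> y = x - 2))
      else if x = 2*n+3 then y = x - 1 else y = x - 3)"

definition ladder_rel :: "nat \<Rightarrow> (nat \<times> nat) set" where
  "ladder_rel n = {(x, y). x \<le> 2*n+3 \<and> y \<le> 2*n+3 \<and> ladder_edge n x y}"

definition ladder :: "nat \<Rightarrow> 'p kripke" where
  "ladder n = \<lparr>kS = {..2*n+3}, kI = {..2*n+3}, kR = ladder_rel n,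
     kL = (\<lambda>x. if odd x then UNIV else {})\<rparr>"

definition ladder_level :: "nat \<Rightarrow> nat \<Rightarrow> nat" where
  "ladder_level n x = (if x = 2*n+3 then n+1 else if even x then x div 2 else x div 2 - 1)"

definition ladder_equiv :: "nat \<Rightarrow> nat \<Rightarrow> nat \<Rightarrow> nat \<Rightarrow> bool" where
  "ladder_equiv n d x y \<longleftrightarrow> x \<le> 2*n+3 \<and> y \<le> 2*n+3 \<and>
     (x = y \<or> (even x = even y \<and> d \<le> ladder_level n x \<and> d \<le> ladder_level n y))"

lemma ladder_rel_iff: "(x, y) \<in> ladder_rel n \<longleftrightarrow> x \<le> 2*n+3 \<and> y \<le> 2*n+3 \<and> ladder_edge n x y"
  by (simp add: ladder_rel_def)

lemma ladder_kR: "kR (ladder n) = ladder_rel n"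
  by (simp add: ladder_def)

lemma ladder_kS: "kS (ladder n) = {..2*n+3}"
  by (simp add: ladder_def)

lemma ladder_kL: "kL (ladder n) x = (if odd x then UNIV else {})"
  by (simp add: ladder_def)

lemma ladder_self_loop: "even x \<Longrightarrow> x \<le> 2*n+3 \<Longrightarrow> (x, x) \<in> ladder_rel n"
  by (simp add: ladder_rel_iff ladder_edge_def)

lemma kripke_wf_ladder: "kripke_wf (ladder n)"
proof -
  have "\<exists>y. (x, y) \<in> ladder_rel n" if "x \<le> 2*n+3" for x
  proof (cases "even x")
    case False
    with that have "(x, if x = 2*n+3 then x - 1 else x - 3) \<in> ladder_rel n"
      by (auto simp: ladder_rel_iff ladder_edge_def)
    then show ?thesis ..
  qed (use that ladder_self_loop in blast)
  moreover have "ladder_rel n \<subseteq> {..2*n+3} \<times> {..2*n+3}"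
    by (auto simp: ladder_rel_iff)
  ultimately show ?thesis
    unfolding kripke_wf_def by (simp add: ladder_def)
qed

lemma ladder_odd_edge: "(x, w) \<in> ladder_rel n \<Longrightarrow> odd x \<Longrightarrow> even w"
  unfolding ladder_rel_iff ladder_edge_def by (auto split: if_splits; presburger)

lemma ladder_level_edge: "(x, w) \<in> ladder_rel n \<Longrightarrow> ladder_level n x - 1 \<le> ladder_level n w"
  unfolding ladder_rel_iff ladder_edge_def ladder_level_def by (auto split: if_splits; presburger)

lemma ladder_level_le: "x \<le> 2*n+3 \<Longrightarrow> ladder_level n x \<le> n+1"
  unfolding ladder_level_def by auto

lemma ladder_level_even: "ladder_level n (2*k) = k"
  unfolding ladder_level_def by presburger

lemma ladder_level_odd: "2*k+1 \<noteq> 2*n+3 \<Longrightarrow> ladder_level n (2*k+1) = k - 1"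
  unfolding ladder_level_def by presburger

lemma ladder_level_top: "ladder_level n (2*n+3) = n+1"
  unfolding ladder_level_def by simp

lemma ladder_edge_choice:
  assumes "y \<le> 2*n+3" and "1 \<le> ladder_level n y" and "even y \<or> b"
  shows "\<exists>z. (y, z) \<in> ladder_rel n \<and> even z = b \<and> ladder_level n y - 1 \<le> ladder_level n z"
proof (cases "even y")
  case True
  show ?thesis
  proof (cases b)
    case True
    with \<open>even y\<close> assms show ?thesis by (auto intro: ladder_self_loop)
  next
    case False
    from \<open>even y\<close> have "y \<noteq> 2*n+3" by presburger
    with assms(2) \<open>even y\<close> have "2 \<le> y" unfolding ladder_level_def by (auto split: if_splits)
    with False \<open>even y\<close> assms show ?thesis unfolding ladder_rel_iff ladder_edge_def ladder_level_def
      by (intro exI[of _ "y + 1"]) (auto; presburger)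
  qed
next
  case False
  with assms show ?thesis unfolding ladder_rel_iff ladder_edge_def ladder_level_def
    by (intro exI[of _ "if y = 2*n+3 then y - 1 else y - 3"]) (auto; presburger)
qed

lemma ladder_no_edge_to_1: "(x, 1) \<notin> ladder_rel n"
  unfolding ladder_rel_iff ladder_edge_def by (auto split: if_splits; presburger)

lemma ladder_rtrancl_not_1: "(x, w) \<in> (ladder_rel n)\<^sup>* \<Longrightarrow> x \<noteq> 1 \<Longrightarrow> w \<noteq> 1"
  by (metis ladder_no_edge_to_1 rtranclE)

lemma ladder_rtrancl_bound: "(x, w) \<in> (ladder_rel n)\<^sup>* \<Longrightarrow> x \<le> 2*n+3 \<Longrightarrow> w \<le> 2*n+3"
  by (erule rtranclE) (auto simp: ladder_rel_iff)

lemma ladder_descend: "j \<le> k \<Longrightarrow> k \<le> n+1 \<Longrightarrow> (2*k, 2*j) \<in> (ladder_rel n)\<^sup>*"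
proof (induction k)
  case (Suc k)
  show ?case
  proof (cases "j = Suc k")
    case False
    with Suc.prems have "j \<le> k" and "k \<le> n+1" by auto
    then have "(2*k, 2*j) \<in> (ladder_rel n)\<^sup>*" by (rule Suc.IH)
    moreover have "(2 * Suc k, 2*k) \<in> ladder_rel n"
      using Suc.prems by (simp add: ladder_rel_iff ladder_edge_def)
    ultimately show ?thesis by (rule converse_rtrancl_into_rtrancl[rotated])
  qed simp
qed simp

lemma ladder_rtrancl_even_same_level:
  assumes "y \<le> 2*n+3"
  shows "(y, 2 * ladder_level n y) \<in> (ladder_rel n)\<^sup>*"
proof (cases "even y")
  case True
  then have "y \<noteq> 2*n+3" by presburger
  with True show ?thesis by (simp add: ladder_level_def)
next
  case False
  then have "(y, 2 * ladder_level n y) \<in> ladder_rel n"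
    using assms unfolding ladder_rel_iff ladder_edge_def ladder_level_def by (auto; presburger)
  then show ?thesis by blast
qed

lemma ladder_rtrancl_below:
  assumes y: "y \<le> 2*n+3" and z: "z \<le> 2*n+3" "z \<noteq> 1"
    and below: "ladder_level n z < ladder_level n y"
  shows "(y, z) \<in> (ladder_rel n)\<^sup>*"
proof -
  define k where "k = ladder_level n y"
  have "k \<le> n+1" using ladder_level_le[OF y] by (simp add: k_def)
  have y_k: "(y, 2*k) \<in> (ladder_rel n)\<^sup>*"
    unfolding k_def by (rule ladder_rtrancl_even_same_level[OF y])
  show ?thesis
  proof (cases "even z")
    case True
    then obtain j where "z = 2*j" by blast
    with below \<open>k \<le> n+1\<close> have "(2*k, z) \<in> (ladder_rel n)\<^sup>*"
      by (simp add: ladder_level_even ladder_descend k_def)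
    with y_k show ?thesis by (rule rtrancl_trans)
  next
    case False
    then obtain j where j: "z = 2*j+1" by (metis oddE)
    have "z \<noteq> 2*n+3" using below ladder_level_le[OF y] ladder_level_top[of n] by auto
    with j have "ladder_level n z = j - 1" using ladder_level_odd[of j n] by simp
    with below have "j \<le> k" by (simp add: k_def)
    then have "(2*k, 2*j) \<in> (ladder_rel n)\<^sup>*" using \<open>k \<le> n+1\<close> by (rule ladder_descend)
    moreover have "(2*j, z) \<in> ladder_rel n"
      using j z \<open>j \<le> k\<close> \<open>k \<le> n+1\<close> by (simp add: ladder_rel_iff ladder_edge_def)
    ultimately show ?thesis using y_k by (meson rtrancl_into_rtrancl rtrancl_trans)
  qed
qed

lemma ladder_equiv_Suc_imp: "ladder_equiv n (Suc d) x y \<Longrightarrow> ladder_equiv n d x y"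
  by (auto simp: ladder_equiv_def)

lemma ladder_equiv_edge_match:
  assumes xy: "ladder_equiv n (Suc d) x y" and e: "(x, w) \<in> ladder_rel n"
  shows "\<exists>w'. (y, w') \<in> ladder_rel n \<and> ladder_equiv n d w w'"
proof (cases "x = y")
  case True
  with e show ?thesis by (auto simp: ladder_equiv_def ladder_rel_iff)
next
  case False
  with xy have xy': "even x = even y" "Suc d \<le> ladder_level n x" "Suc d \<le> ladder_level n y"
    "y \<le> 2*n+3" by (auto simp: ladder_equiv_def)
  have "d \<le> ladder_level n w" using ladder_level_edge[OF e] xy' by linarith
  have "even y \<or> even w" using ladder_odd_edge[OF e] xy' by auto
  then obtain z where z: "(y, z) \<in> ladder_rel n" "even z = even w"
      "ladder_level n y - 1 \<le> ladder_level n z"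
    using ladder_edge_choice[of y n "even w"] xy' by auto
  with \<open>d \<le> ladder_level n w\<close> xy' e have "ladder_equiv n d w z"
    unfolding ladder_equiv_def ladder_rel_iff by auto
  with z show ?thesis by blast
qed

text \<open>A state w reachable from x is matched either by itself, when it lies strictly below
  the level of y, or else by y or a successor of y of the right parity.\<close>
lemma ladder_equiv_rtrancl_match:
  assumes xy: "ladder_equiv n (Suc d) x y" and r: "(x, w) \<in> (ladder_rel n)\<^sup>*"
  shows "\<exists>w'. (y, w') \<in> (ladder_rel n)\<^sup>* \<and> ladder_equiv n d w w'"
proof (cases "x = y")
  case True
  with xy r ladder_rtrancl_bound[OF r] show ?thesis by (auto simp: ladder_equiv_def)
next
  case False
  with xy have xy': "even x = even y" "Suc d \<le> ladder_level n x" "Suc d \<le> ladder_level n y"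
    "x \<le> 2*n+3" "y \<le> 2*n+3" by (auto simp: ladder_equiv_def)
  have "x \<noteq> 1" using xy'(2) by (auto simp: ladder_level_def)
  with r have "w \<noteq> 1" by (rule ladder_rtrancl_not_1)
  have w: "w \<le> 2*n+3" using ladder_rtrancl_bound[OF r xy'(4)] .
  show ?thesis
  proof (cases "ladder_level n w < ladder_level n y")
    case True
    with xy'(5) w \<open>w \<noteq> 1\<close> have "(y, w) \<in> (ladder_rel n)\<^sup>*" by (rule ladder_rtrancl_below)
    with w show ?thesis by (auto simp: ladder_equiv_def)
  next
    case False
    show ?thesis
    proof (cases "even w = even y")
      case True
      with False xy' w show ?thesis by (intro exI[of _ y]) (auto simp: ladder_equiv_def)
    next
      case parity: False
      then obtain z where z: "(y, z) \<in> ladder_rel n" "even z = even w"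
          "ladder_level n y - 1 \<le> ladder_level n z"
        using ladder_edge_choice[of y n "even w"] xy' by auto
      with False xy' w have "ladder_equiv n d w z"
        unfolding ladder_equiv_def ladder_rel_iff by auto
      with z show ?thesis by blast
    qed
  qed
qed

lemma kpaths_ladder_const: "even x \<Longrightarrow> x \<le> 2*n+3 \<Longrightarrow> (\<lambda>_. x) \<in> kpaths (ladder n) x"
  by (simp add: kpaths_def ladder_kR ladder_self_loop)

text \<open>K abbreviates ladder n at one fixed label type, so that the paths in the statement
  and in the proof live in the same structure.\<close>
lemma ladder_transfer_Nxt:
  fixes n :: nat and K :: "'p kripke"
  defines "K \<equiv> ladder n"
  assumes xy: "ladder_equiv n (Suc d) x y" and P: "\<And>w w'. ladder_equiv n d w w' \<Longrightarrow> P w = P w'"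
    and \<pi>: "\<pi> \<in> kpaths K x" and "P (\<pi> 1)"
  shows "\<exists>\<pi>'\<in>kpaths K y. P (\<pi>' 1)"
proof -
  have "(x, \<pi> 1) \<in> ladder_rel n" using kpaths_first_edge[OF \<pi>] by (simp add: K_def ladder_kR)
  with xy obtain w' where w': "(y, w') \<in> ladder_rel n" "ladder_equiv n d (\<pi> 1) w'"
    using ladder_equiv_edge_match by blast
  have "w' \<in> kS K" using w' by (simp add: K_def ladder_kS ladder_rel_iff)
  then obtain \<rho> where \<rho>: "\<rho> \<in> kpaths K w'"
    using kpaths_nonempty kripke_wf_ladder unfolding K_def by blast
  have "case_nat y \<rho> \<in> kpaths K y"
    using w'(1) \<rho> by (intro kpaths_cons) (simp add: K_def ladder_kR)
  moreover have "P (case_nat y \<rho> 1)"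
    using \<rho> P[OF w'(2)] \<open>P (\<pi> 1)\<close> by (simp add: kpaths_def)
  ultimately show ?thesis by blast
qed

lemma ladder_transfer_Evt:
  fixes n :: nat and K :: "'p kripke"
  defines "K \<equiv> ladder n"
  assumes xy: "ladder_equiv n (Suc d) x y" and P: "\<And>w w'. ladder_equiv n d w w' \<Longrightarrow> P w = P w'"
    and \<pi>: "\<pi> \<in> kpaths K x" and "P (\<pi> j)"
  shows "\<exists>\<pi>'\<in>kpaths K y. \<exists>j'. P (\<pi>' j')"
proof -
  have "(x, \<pi> j) \<in> (ladder_rel n)\<^sup>*"
    using kpaths_rtrancl[OF \<pi>] by (simp add: K_def ladder_kR)
  with xy obtain w' where w': "(y, w') \<in> (ladder_rel n)\<^sup>*" "ladder_equiv n d (\<pi> j) w'"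
    using ladder_equiv_rtrancl_match by blast
  have "y \<in> kS K" using xy by (simp add: K_def ladder_kS ladder_equiv_def)
  with w' obtain \<pi>' j' where "\<pi>' \<in> kpaths K y" "\<pi>' j' = w'"
    using rtrancl_kpaths[of K y w'] kripke_wf_ladder by (auto simp: K_def ladder_kR)
  with P[OF w'(2)] \<open>P (\<pi> j)\<close> show ?thesis by blast
qed

text \<open>If y is odd, so is x, and the even successor of x is matched by an even successor of
  y, which carries a self-loop.\<close>
lemma ladder_transfer_Alw:
  fixes n :: nat and K :: "'p kripke"
  defines "K \<equiv> ladder n"
  assumes xy: "ladder_equiv n (Suc d) x y" and P: "\<And>w w'. ladder_equiv n d w w' \<Longrightarrow> P w = P w'"
    and \<pi>: "\<pi> \<in> kpaths K x" and all: "\<forall>i. P (\<pi> i)"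
  shows "\<exists>\<pi>'\<in>kpaths K y. \<forall>i. P (\<pi>' i)"
proof -
  have y: "y \<le> 2*n+3" using xy by (simp add: ladder_equiv_def)
  have "P y" using P[OF ladder_equiv_Suc_imp[OF xy]] all \<pi> by (auto simp: kpaths_def)
  consider "x = y" | "even y" | "x \<noteq> y" "odd y" by blast
  then show ?thesis
  proof cases
    case 1
    with \<pi> all show ?thesis by blast
  next
    case 2
    with \<open>P y\<close> y show ?thesis
      unfolding K_def by (intro bexI[of _ "\<lambda>_. y"] kpaths_ladder_const) auto
  next
    case 3
    with xy have "odd x" by (auto simp: ladder_equiv_def)
    have e: "(x, \<pi> 1) \<in> ladder_rel n" using kpaths_first_edge[OF \<pi>] by (simp add: K_def ladder_kR)
    with xy obtain w' where w': "(y, w') \<in> ladder_rel n" "ladder_equiv n d (\<pi> 1) w'"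
      using ladder_equiv_edge_match by blast
    from e \<open>odd x\<close> have "even (\<pi> 1)" by (rule ladder_odd_edge)
    with w'(2) have "even w'" and "w' \<le> 2*n+3" by (auto simp: ladder_equiv_def)
    then have "(\<lambda>_. w') \<in> kpaths K w'" unfolding K_def by (rule kpaths_ladder_const)
    with w'(1) have "case_nat y (\<lambda>_. w') \<in> kpaths K y"
      by (intro kpaths_cons) (simp_all add: K_def ladder_kR)
    moreover have "P w'" using P[OF w'(2)] all by blast
    ultimately show ?thesis using \<open>P y\<close> by (intro bexI[of _ "case_nat y (\<lambda>_. w')"]) (auto split: nat.split)
  qed
qed

lemma graded_path_bisimulation_ladder:
  "graded_path_bisimulation (ladder n :: 'p kripke) (ladder_equiv n)"
proof
  show "kripke_wf (ladder n :: 'p kripke)" by (rule kripke_wf_ladder)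
next
  fix d x y
  assume xy: "ladder_equiv n d x y"
  then show "x \<in> kS (ladder n :: 'p kripke)" by (simp add: ladder_equiv_def ladder_kS)
  from xy show "ladder_equiv n d y x" by (auto simp: ladder_equiv_def)
  from xy have "odd x \<longleftrightarrow> odd y" by (auto simp: ladder_equiv_def)
  then show "kL (ladder n :: 'p kripke) x = kL (ladder n :: 'p kripke) y" by (simp add: ladder_kL)
next
  fix d x y T P \<pi>
  assume xy: "ladder_equiv n (Suc d) x y" and P: "\<And>w w'. ladder_equiv n d w w' \<Longrightarrow> P w = P w'"
    and \<pi>: "\<pi> \<in> kpaths (ladder n :: 'p kripke) x" and "holds_path T P \<pi>"
  then show "\<exists>\<pi>'\<in>kpaths (ladder n :: 'p kripke) y. holds_path T P \<pi>'"
    using ladder_transfer_Nxt[where P = P, OF xy P \<pi>] ladder_transfer_Evt[where P = P, OF xy P \<pi>]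
      ladder_transfer_Alw[where P = P, OF xy P \<pi>]
    by (cases T) (simp_all, blast+)
qed

lemma ladder_top_recurrent: "\<exists>\<pi>\<in>kpaths (ladder n) (2*n+2). \<forall>i. \<exists>j\<ge>i. odd (\<pi> j)"
proof -
  define \<pi> where "\<pi> i = (if even i then 2*n+2 else 2*n+3)" for i :: nat
  have "\<pi> \<in> kpaths (ladder n) (2*n+2)"
    by (simp add: \<pi>_def kpaths_def ladder_kR ladder_rel_iff ladder_edge_def)
  moreover have "odd (\<pi> (2*i+1))" for i by (simp add: \<pi>_def)
  then have "\<forall>i. \<exists>j\<ge>i. odd (\<pi> j)" by (metis le_add1 mult_2 trans_le_add1)
  ultimately show ?thesis by blast
qed

lemma ladder_rel_below_top:
  assumes "(x, y) \<in> ladder_rel n" and "x \<le> 2*n+1" and "x \<noteq> 1"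
  shows "y \<le> 2*n+1 \<and> y \<noteq> 1 \<and> y div 2 \<le> x div 2 \<and> (odd x \<longrightarrow> y div 2 < x div 2)"
proof -
  from assms(2) have "x \<noteq> 2*n+3" by simp
  with assms(1) consider "even x" "y = x" | "even x" "2 \<le> x" "y = x + 1 \<or> y = x - 2"
    | "odd x" "y = x - 3"
    unfolding ladder_rel_iff ladder_edge_def by (auto split: if_splits)
  then show ?thesis using assms(2,3) by cases presburger+
qed

lemma ladder_not_recurrent:
  assumes \<pi>: "\<pi> \<in> kpaths (ladder n) (2*n)"
  shows "\<not> (\<forall>i. \<exists>j\<ge>i. odd (\<pi> j))"
proof
  assume recurrent: "\<forall>i. \<exists>j\<ge>i. odd (\<pi> j)"
  have \<pi>0: "\<pi> 0 = 2*n" and edge: "(\<pi> i, \<pi> (Suc i)) \<in> ladder_rel n" for i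
    using \<pi> by (auto simp: kpaths_def ladder_kR)
  have below: "\<pi> i \<le> 2*n+1 \<and> \<pi> i \<noteq> 1" for i
    by (induction i) (use \<pi>0 ladder_rel_below_top[OF edge] in auto)
  have step: "\<pi> (Suc i) div 2 \<le> \<pi> i div 2" "odd (\<pi> i) \<Longrightarrow> \<pi> (Suc i) div 2 < \<pi> i div 2" for i
    using ladder_rel_below_top[OF edge] below by blast+
  have mono: "i \<le> j \<Longrightarrow> \<pi> j div 2 \<le> \<pi> i div 2" for i j
    using lift_Suc_antimono_le[of "\<lambda>i. \<pi> i div 2"] step(1) by blast
  have "\<exists>j. \<pi> j div 2 + k \<le> n" for k
  proof (induction k)
    case 0 show ?case using \<pi>0 by (intro exI[of _ 0]) simp
  next
    case (Suc k)
    then obtain j where j: "\<pi> j div 2 + k \<le> n" by blast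
    obtain j' where "j' \<ge> j" and "odd (\<pi> j')" using recurrent by blast
    then have "\<pi> (Suc j') div 2 < \<pi> j div 2" using step(2) mono by (meson order.strict_trans2)
    with j show ?case by (intro exI[of _ "Suc j'"]) linarith
  qed
  from this[of "Suc n"] show False by auto
qed

lemma E_recurrence_not_atl_expressible:
  fixes \<psi> :: "'p atl" and p :: 'p
  shows "\<not> (\<forall>K s. kripke_wf K \<and> s \<in> kS K \<longrightarrow>
        (atl_sat (cgs_of K) s \<psi> \<longleftrightarrow> b4_le b0011 (rval K s (REx Alw (RProp p)))))"
proof
  assume expr: "\<forall>K s. kripke_wf K \<and> s \<in> kS K \<longrightarrow>
        (atl_sat (cgs_of K) s \<psi> \<longleftrightarrow> b4_le b0011 (rval K s (REx Alw (RProp p))))"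
  define n where "n = atl_depth \<psi>"
  let ?K = "ladder n :: 'p kripke"
  let ?recurrent = "\<lambda>s. \<exists>\<pi>\<in>kpaths ?K s. \<forall>i. \<exists>j\<ge>i. odd (\<pi> j)"
  have label: "p \<in> kL ?K x \<longleftrightarrow> odd x" for x by (simp add: ladder_kL)
  have expr_ladder: "atl_sat (cgs_of ?K) s \<psi> \<longleftrightarrow> ?recurrent s" if "s \<le> 2*n+2" for s
  proof -
    have "s \<in> kS ?K" using that by (simp add: ladder_kS)
    with expr kripke_wf_ladder have "atl_sat (cgs_of ?K) s \<psi> \<longleftrightarrow> b4_le b0011 (rval ?K s (REx Alw (RProp p)))"
      by blast
    also have "\<dots> \<longleftrightarrow> ?recurrent s"
      using rval_EAlw_prop_ge_b0011[OF kripke_wf_ladder \<open>s \<in> kS ?K\<close>, of p] by (simp only: label)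
    finally show ?thesis .
  qed
  have "ladder_equiv n n (2*n+2) (2*n)"
    using ladder_level_even[of n "n+1"] ladder_level_even[of n n] by (simp add: ladder_equiv_def)
  then have "atl_sat (cgs_of ?K) (2*n+2) \<psi> \<longleftrightarrow> atl_sat (cgs_of ?K) (2*n) \<psi>"
    by (intro graded_path_bisimulation.atl_sat_invariant[OF graded_path_bisimulation_ladder])
      (simp_all add: n_def)
  then have "?recurrent (2*n+2) \<longleftrightarrow> ?recurrent (2*n)" using expr_ladder by simp
  with ladder_top_recurrent ladder_not_recurrent show False by blast
qed

theorem corollary1:
  fixes dummy :: "'p::finite"
  shows "(\<exists>\<psi> :: 'p atl. \<forall>\<chi> :: 'p rctl. \<forall>u\<in>B4.
            \<not> (\<forall>G s. cgs_wf G \<and> s \<in> cSt G \<longrightarrow>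
                   (atl_sat G s \<psi> \<longleftrightarrow> b4_le u (rval (kripke_of G) s \<chi>))))
       \<and> (\<exists>\<chi> :: 'p rctl. \<exists>u\<in>B4. \<forall>\<psi> :: 'p atl.
            \<not> (\<forall>K s. kripke_wf K \<and> s \<in> kS K \<longrightarrow>
                   (atl_sat (cgs_of K) s \<psi> \<longleftrightarrow> b4_le u (rval K s \<chi>))))"
proof -
  have "b0011 \<in> B4" by (simp add: B4_def)
  then show ?thesis
    using coalition_next_not_rctl_expressible[of dummy] E_recurrence_not_atl_expressible[where p = dummy]
    by blast
qed

end
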